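(* There exist a sequence $(w_n)_{n\ge1}$ of words over $\{0,1\}$ and a sequence $(\ell_n)_{n\ge1}$ of positive integers such that for every $n$: $|w_n|=2^n$, $\mathrm{even}(w_{n+1})=w_n$, $w_n$ is $\ell_n$-perfect, and $(\ell_n)_{n\ge1}$ is non-decreasing and unbounded. Furthermore, this can be achieved with $w_1=01$.
   Context: For a finite word $z=a_1\cdots a_m$, $\mathrm{even}(z)=a_2a_4\cdots$. For words $w,u$, $|w|^{al}_u=|\{i: w[i..i+|u|-1]=u,\ i\equiv1\bmod|u|\}|$. A finite binary word $w$ is $\ell$-perfect if $|w|$ is a multiple of $\ell$ and every word $u$ of length $\ell$ satisfies $|w|^{al}_u=|w|/(\ell2^\ell)$. *)

theory Defs
  imports Complex_Main
begin

text \<open>Binary words are lists of booleans: False = 0, True = 1.\<close>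

text \<open>even(a_1 ... a_m) = a_2 a_4 ...: the letters at even 1-based positions.\<close>
definition even_part :: "'a list \<Rightarrow> 'a list" where
  "even_part z = nths z {i. odd i}"

text \<open>Aligned occurrences: 1-based positions i with w[i..i+|u|-1] = u and
  i = 1 mod |u|, i.e. 0-based start positions j that are multiples of |u|.\<close>
definition aligned_count :: "'a list \<Rightarrow> 'a list \<Rightarrow> nat" where
  "aligned_count w u = card {j. j + length u \<le> length w \<and> length u dvd j
                              \<and> take (length u) (drop j w) = u}"

definition perfect :: "nat \<Rightarrow> bool list \<Rightarrow> bool" where
  "perfect l w \<longleftrightarrow> l dvd length w \<and>
     (\<forall>u. length u = l \<longrightarrow>
        real (aligned_count w u) = real (length w) / (real l * 2 ^ l))"

end

theory Submission
  imports Defs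
begin

(* Call w "M-uniform with multiplicity c" if every binary word of length M occurs exactly c
   times among the aligned length-M blocks of w. If 2^M divides c, interleave w with the word
   whose i-th block is the word number (r mod 2^M) of length M, where r counts the earlier
   blocks of w equal to its i-th block. The result has even part w, and since the c occurrences
   of each block of w are paired with each of the 2^M words exactly c/2^M times, it is
   2M-uniform with multiplicity c/2^M. Cutting blocks in halves makes every 2M-uniform word
   M-uniform as well. Starting from 01 and 0011, each doubling of the length either doubles the
   block length or keeps it (halve, then interleave). Taking block length 2^k at length 2^n,
   with k maximal such that k + 2^k <= n, the multiplicity 2^(n-k-2^k) is always divisible
   enough, and k tends to infinity. *)

definition block :: "nat \<Rightarrow> 'a list \<Rightarrow> nat \<Rightarrow> 'a list" where
  "block L w i = take L (drop (i * L) w)"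

definition block_count :: "nat \<Rightarrow> 'a list \<Rightarrow> 'a list \<Rightarrow> nat" where
  "block_count L w u = card {i. i < length w div L \<and> block L w i = u}"

definition blocks_uniform :: "nat \<Rightarrow> bool list \<Rightarrow> nat \<Rightarrow> bool" where
  "blocks_uniform L w c \<longleftrightarrow>
     0 < L \<and> L dvd length w \<and> (\<forall>u. length u = L \<longrightarrow> block_count L w u = c)"

lemma length_block:
  "i * L + L \<le> length w \<Longrightarrow> length (block L w i) = L"
  by (simp add: block_def)

lemma nth_block:
  "i * L + L \<le> length w \<Longrightarrow> r < L \<Longrightarrow> block L w i ! r = w ! (i * L + r)"
  by (simp add: block_def add.commute)

lemma block_end_le:
  assumes "i < length w div L"
  shows "i * L + L \<le> length w"
proof -
  have "0 < L" using assms by (cases "L = 0") auto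
  then show ?thesis
    using assms by (metis Suc_leI less_eq_div_iff_mult_less_eq add.commute mult_Suc)
qed

lemma aligned_count_eq_block_count:
  assumes "0 < L" "L dvd length w" "length u = L"
  shows "aligned_count w u = block_count L w u"
proof -
  have "{j. j + length u \<le> length w \<and> length u dvd j \<and> take (length u) (drop j w) = u}
      = (\<lambda>i. i * L) ` {i. i < length w div L \<and> block L w i = u}"
  proof (intro set_eqI iffI)
    fix j
    assume "j \<in> {j. j + length u \<le> length w \<and> length u dvd j \<and> take (length u) (drop j w) = u}"
    then have j: "j + L \<le> length w" "L dvd j" "take L (drop j w) = u"
      using assms(3) by auto
    obtain i where i: "j = i * L" using j(2) by (metis dvdE mult.commute)
    have "Suc i \<le> length w div L"
      using j(1) i assms(1) by (simp add: less_eq_div_iff_mult_less_eq add.commute)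
    then show "j \<in> (\<lambda>i. i * L) ` {i. i < length w div L \<and> block L w i = u}"
      using j(3) i by (auto simp: block_def)
  next
    fix j assume "j \<in> (\<lambda>i. i * L) ` {i. i < length w div L \<and> block L w i = u}"
    then obtain i where "j = i * L" "i < length w div L" "block L w i = u" by blast
    then show "j \<in> {j. j + length u \<le> length w \<and> length u dvd j \<and> take (length u) (drop j w) = u}"
      using block_end_le assms(3) by (auto simp: block_def)
  qed
  moreover have "inj_on (\<lambda>i. i * L) X" for X
    using assms(1) by (auto simp: inj_on_def)
  ultimately show ?thesis
    unfolding aligned_count_def block_count_def by (simp add: card_image)
qed

lemma perfect_if_blocks_uniform:
  assumes "blocks_uniform L w c" "c * (L * 2 ^ L) = length w"
  shows "perfect L w"
  unfolding perfect_def
proof (intro conjI allI impI)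
  show L: "L dvd length w" using assms(1) by (simp add: blocks_uniform_def)
  fix u :: "bool list" assume u: "length u = L"
  have "aligned_count w u = c"
    using assms(1) aligned_count_eq_block_count[OF _ L u] u by (simp add: blocks_uniform_def)
  moreover have "real (length w) = real c * (real L * 2 ^ L)"
    by (metis assms(2) of_nat_mult of_nat_numeral of_nat_power)
  ultimately show "real (aligned_count w u) = real (length w) / (real L * 2 ^ L)"
    using assms(1) by (simp add: blocks_uniform_def)
qed

fun interleave :: "'a list \<Rightarrow> 'a list \<Rightarrow> 'a list" where
  "interleave (a # x) (b # y) = a # b # interleave x y"
| "interleave _ _ = []"

lemma length_interleave:
  "length x = length y \<Longrightarrow> length (interleave x y) = 2 * length x"
  by (induction x y rule: interleave.induct) auto

lemma drop_interleave: "drop (2 * k) (interleave x y) = interleave (drop k x) (drop k y)"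
proof (induction x y arbitrary: k rule: interleave.induct)
  case (1 a x b y) then show ?case by (cases k) auto
qed auto

lemma take_interleave: "take (2 * k) (interleave x y) = interleave (take k x) (take k y)"
proof (induction x y arbitrary: k rule: interleave.induct)
  case (1 a x b y) then show ?case by (cases k) auto
qed auto

lemma even_part_Nil [simp]: "even_part [] = []"
  by (simp add: even_part_def)

lemma even_part_Cons_Cons: "even_part (a # b # z) = b # even_part z"
  by (simp add: even_part_def nths_Cons)

lemma even_part_interleave: "length x = length y \<Longrightarrow> even_part (interleave x y) = y"
  by (induction x y rule: interleave.induct) (simp_all add: even_part_Cons_Cons)

lemma interleave_eq_iff:
  assumes "length a = length b" "length c = length d" "length a = length c"
  shows "interleave a b = interleave c d \<longleftrightarrow> a = c \<and> b = d"
  using assms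
proof (induction a b arbitrary: c d rule: interleave.induct)
  case (1 x a y b)
  then obtain z c' t d' where "c = z # c'" "d = t # d'"
    by (cases c; cases d) auto
  then show ?case using "1" by auto
qed auto

lemma interleave_surj:
  "length u = 2 * m \<Longrightarrow> \<exists>a b. length a = m \<and> length b = m \<and> u = interleave a b"
proof (induction m arbitrary: u)
  case (Suc m)
  then obtain x y z where u: "u = x # y # z" "length z = 2 * m"
    by (cases u; cases "tl u") auto
  then obtain a b where "length a = m" "length b = m" "z = interleave a b"
    using Suc.IH by blast
  with u show ?case by (intro exI[of _ "x # a"] exI[of _ "y # b"]) auto
qed simp

lemma block_interleave:
  "block (2 * M) (interleave x y) i = interleave (block M x i) (block M y i)"
  by (metis block_def drop_interleave take_interleave mult.left_commute)

lemma block_double_even: "block M w (2 * i) = take M (block (2 * M) w i)"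
  by (simp add: block_def mult.commute mult.left_commute)

lemma block_double_odd: "block M w (2 * i + 1) = drop M (block (2 * M) w i)"
proof -
  have "(2 * i + 1) * M = M + i * (2 * M)" by (simp add: algebra_simps)
  then show ?thesis by (simp add: block_def drop_take ac_simps)
qed

lemma card_mod_class:
  assumes "s < (P::nat)"
  shows "card {k. k < m * P \<and> k mod P = s} = m"
proof -
  have "{k. k < m * P \<and> k mod P = s} = (\<lambda>q. q * P + s) ` {..<m}"
  proof (intro set_eqI iffI)
    fix k assume k: "k \<in> {k. k < m * P \<and> k mod P = s}"
    then have "k = k div P * P + s" using div_mult_mod_eq[of k P] by simp
    moreover have "k div P < m" using k by (simp add: less_mult_imp_div_less)
    ultimately show "k \<in> (\<lambda>q. q * P + s) ` {..<m}" by blast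
  next
    fix k assume "k \<in> (\<lambda>q. q * P + s) ` {..<m}"
    then obtain q where q: "q < m" "k = q * P + s" by blast
    have "q * P + s < Suc q * P" using assms by simp
    also have "\<dots> \<le> m * P" using q(1) by (intro mult_le_mono1) simp
    finally show "k \<in> {k. k < m * P \<and> k mod P = s}" using q assms by simp
  qed
  moreover have "inj_on (\<lambda>q. q * P + s) {..<m}"
    using assms by (auto simp: inj_on_def)
  ultimately show ?thesis by (simp add: card_image)
qed

lemma card_less_double:
  "card {j. j < 2 * (n::nat) \<and> P j} = card {i. i < n \<and> P (2 * i)} + card {i. i < n \<and> P (2 * i + 1)}"
proof -
  have "{j. j < 2 * n \<and> P j}
      = (\<lambda>i. 2 * i) ` {i. i < n \<and> P (2 * i)} \<union> (\<lambda>i. 2 * i + 1) ` {i. i < n \<and> P (2 * i + 1)}"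
  proof (intro set_eqI iffI)
    fix j assume j: "j \<in> {j. j < 2 * n \<and> P j}"
    show "j \<in> (\<lambda>i. 2 * i) ` {i. i < n \<and> P (2 * i)} \<union> (\<lambda>i. 2 * i + 1) ` {i. i < n \<and> P (2 * i + 1)}"
      using j by (cases "even j") (auto elim!: evenE oddE)
  qed auto
  moreover have "(\<lambda>i. 2 * i) ` X \<inter> (\<lambda>i. 2 * i + 1) ` Y = {}" for X Y :: "nat set"
    by auto presburger
  ultimately show ?thesis
    by (simp add: card_Un_disjoint card_image inj_on_def)
qed

definition occurrence_rank :: "(nat \<Rightarrow> 'a) \<Rightarrow> nat \<Rightarrow> nat" where
  "occurrence_rank B i = card {j. j < i \<and> B j = B i}"

lemma card_occurrence_rank_mod:
  "card {i. i < n \<and> B i = v \<and> occurrence_rank B i mod P = s}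
     = card {k. k < card {i. i < n \<and> B i = v} \<and> k mod P = s}"
proof (induction n)
  case (Suc n)
  let ?c = "card {i. i < n \<and> B i = v}"
  let ?rank_ok = "\<lambda>i. occurrence_rank B i mod P = s"
  show ?case
  proof (cases "B n = v")
    case True
    then have "occurrence_rank B n = ?c" by (simp add: occurrence_rank_def)
    then have "{i. i < Suc n \<and> B i = v \<and> ?rank_ok i}
        = (if ?c mod P = s then insert n else id) {i. i < n \<and> B i = v \<and> ?rank_ok i}"
      using True by (auto simp: less_Suc_eq)
    moreover have "{i. i < Suc n \<and> B i = v} = insert n {i. i < n \<and> B i = v}"
      using True by (auto simp: less_Suc_eq)
    moreover have "{k. k < Suc ?c \<and> k mod P = s}
        = (if ?c mod P = s then insert ?c else id) {k. k < ?c \<and> k mod P = s}"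
      by (auto simp: less_Suc_eq)
    ultimately show ?thesis
      using Suc.IH by simp
  next
    case False
    then have "{i. i < Suc n \<and> B i = v} = {i. i < n \<and> B i = v}"
      "{i. i < Suc n \<and> B i = v \<and> ?rank_ok i} = {i. i < n \<and> B i = v \<and> ?rank_ok i}"
      by (auto simp: less_Suc_eq)
    then show ?thesis using Suc.IH by simp
  qed
qed simp

lemma card_bool_lists: "card {u :: bool list. length u = n} = 2 ^ n"
  using card_lists_length_eq[of "UNIV :: bool set" n] by simp

lemma card_bool_lists_prefix:
  assumes "length v = m"
  shows "card {u :: bool list. length u = m + n \<and> take m u = v} = 2 ^ n"
proof -
  have "{u. length u = m + n \<and> take m u = v} = (\<lambda>y. v @ y) ` {y. length y = n}"
  proof (intro set_eqI iffI)
    fix u assume u: "u \<in> {u. length u = m + n \<and> take m u = v}"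
    then have "u = v @ drop m u" using append_take_drop_id[of m u] by simp
    moreover have "length (drop m u) = n" using u by simp
    ultimately show "u \<in> (\<lambda>y. v @ y) ` {y. length y = n}" by blast
  next
    fix u assume "u \<in> (\<lambda>y. v @ y) ` {y. length y = n}"
    then show "u \<in> {u. length u = m + n \<and> take m u = v}" using assms by auto
  qed
  moreover have "inj (\<lambda>y :: bool list. v @ y)" by (simp add: inj_def)
  ultimately show ?thesis by (simp add: card_image inj_on_subset card_bool_lists)
qed

lemma card_bool_lists_suffix:
  assumes "length v = n"
  shows "card {u :: bool list. length u = m + n \<and> drop m u = v} = 2 ^ m"
proof -
  have "{u. length u = m + n \<and> drop m u = v} = (\<lambda>y. y @ v) ` {y. length y = m}"
  proof (intro set_eqI iffI)
    fix u assume u: "u \<in> {u. length u = m + n \<and> drop m u = v}"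
    then have "u = take m u @ v" using append_take_drop_id[of m u] by simp
    moreover have "length (take m u) = m" using u by simp
    ultimately show "u \<in> (\<lambda>y. y @ v) ` {y. length y = m}" by blast
  next
    fix u assume "u \<in> (\<lambda>y. y @ v) ` {y. length y = m}"
    then show "u \<in> {u. length u = m + n \<and> drop m u = v}" using assms by auto
  qed
  moreover have "inj (\<lambda>y :: bool list. y @ v)" by (simp add: inj_def)
  ultimately show ?thesis by (simp add: card_image inj_on_subset card_bool_lists)
qed

lemma card_blocks_in:
  assumes "blocks_uniform L w c" "U \<subseteq> {u. length u = L}"
  shows "card {i. i < length w div L \<and> block L w i \<in> U} = card U * c"
proof -
  have fin: "finite U"
    using assms(2) finite_lists_length_eq[of "UNIV :: bool set" L] by (auto intro: finite_subset)
  have "{i. i < length w div L \<and> block L w i \<in> U}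
      = (\<Union>u\<in>U. {i. i < length w div L \<and> block L w i = u})" by auto
  also have "card \<dots> = (\<Sum>u\<in>U. block_count L w u)"
    unfolding block_count_def using fin by (intro card_UN_disjoint) auto
  also have "\<dots> = card U * c"
    using assms by (simp add: blocks_uniform_def subset_eq)
  finally show ?thesis .
qed

lemma blocks_uniform_halve:
  assumes "blocks_uniform (2 * M) w c" "0 < M"
  shows "blocks_uniform M w (2 * 2 ^ M * c)"
  unfolding blocks_uniform_def
proof (intro conjI allI impI)
  have dvd: "2 * M dvd length w" using assms(1) by (simp add: blocks_uniform_def)
  then show "M dvd length w" by (auto intro: dvd_mult_left)
  show "0 < M" by (fact assms(2))
  fix v :: "bool list" assume v: "length v = M"
  let ?n = "length w div (2 * M)"
  have n: "length w div M = 2 * ?n"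
    using dvd assms(2) by auto
  have "block_count M w v
      = card {i. i < ?n \<and> block (2 * M) w i \<in> {u. length u = M + M \<and> take M u = v}}
      + card {i. i < ?n \<and> block (2 * M) w i \<in> {u. length u = M + M \<and> drop M u = v}}"
    unfolding block_count_def n card_less_double block_double_even block_double_odd
    using length_block[OF block_end_le, where L = "2 * M" and w = w]
    by (intro arg_cong2[where f = "(+)"] arg_cong[where f = card]) (auto simp: mult_2)
  also have "\<dots> = card {u :: bool list. length u = M + M \<and> take M u = v} * c
                 + card {u :: bool list. length u = M + M \<and> drop M u = v} * c"
    by (subst (1 2) card_blocks_in[OF assms(1)]) auto
  also have "\<dots> = 2 ^ M * c + 2 ^ M * c"
    using card_bool_lists_prefix[OF v] card_bool_lists_suffix[OF v] by simp
  finally show "block_count M w v = 2 * 2 ^ M * c" by simp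
qed

definition word_enum :: "nat \<Rightarrow> nat \<Rightarrow> bool list" where
  "word_enum M = (SOME h. bij_betw h {0..<2 ^ M} {u. length u = M})"

lemma bij_word_enum: "bij_betw (word_enum M) {0..<2 ^ M} {u. length u = M}"
proof -
  have "\<exists>h. bij_betw h {0..<2 ^ M :: nat} {u :: bool list. length u = M}"
    using ex_bij_betw_nat_finite[OF finite_lists_length_eq[of "UNIV :: bool set" M]]
    by (simp add: card_bool_lists)
  then show ?thesis unfolding word_enum_def by (rule someI_ex)
qed

definition relabel :: "nat \<Rightarrow> bool list \<Rightarrow> bool list" where
  "relabel M w = map (\<lambda>p. word_enum M (occurrence_rank (block M w) (p div M) mod 2 ^ M) ! (p mod M))
                   [0..<length w]"

definition refine :: "nat \<Rightarrow> bool list \<Rightarrow> bool list" where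
  "refine M w = interleave (relabel M w) w"

lemma length_relabel [simp]: "length (relabel M w) = length w"
  by (simp add: relabel_def)

lemma length_refine: "length (refine M w) = 2 * length w"
  by (simp add: refine_def length_interleave)

lemma even_part_refine: "even_part (refine M w) = w"
  by (simp add: refine_def even_part_interleave)

lemma block_relabel:
  assumes "0 < M" "i < length w div M"
  shows "block M (relabel M w) i = word_enum M (occurrence_rank (block M w) i mod 2 ^ M)"
proof (rule nth_equalityI)
  have le: "i * M + M \<le> length w" using block_end_le[OF assms(2)] .
  have "word_enum M (occurrence_rank (block M w) i mod 2 ^ M) \<in> {u. length u = M}"
    using bij_betw_apply[OF bij_word_enum] by simp
  then show len: "length (block M (relabel M w) i) = length (word_enum M (occurrence_rank (block M w) i mod 2 ^ M))"
    using length_block[of i M "relabel M w"] le by simp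
  fix r assume "r < length (block M (relabel M w) i)"
  then have r: "r < M" using length_block[of i M "relabel M w"] le by simp
  moreover have "(i * M + r) div M = i" "(i * M + r) mod M = r" using r by auto
  ultimately show "block M (relabel M w) i ! r = word_enum M (occurrence_rank (block M w) i mod 2 ^ M) ! r"
    using nth_block[of i M "relabel M w" r] le by (simp add: relabel_def)
qed

lemma block_refine:
  assumes "0 < M" "i < length w div M"
  shows "block (2 * M) (refine M w) i
       = interleave (word_enum M (occurrence_rank (block M w) i mod 2 ^ M)) (block M w i)"
  using assms by (simp add: refine_def block_interleave block_relabel)

lemma blocks_uniform_refine:
  assumes uniform: "blocks_uniform M w c" and dvd: "2 ^ M dvd c"
  shows "blocks_uniform (2 * M) (refine M w) (c div 2 ^ M)"
  unfolding blocks_uniform_def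
proof (intro conjI allI impI)
  have M: "0 < M" "M dvd length w" using uniform by (auto simp: blocks_uniform_def)
  then show "0 < 2 * M" "2 * M dvd length (refine M w)" by (auto simp: length_refine)
  fix u :: "bool list" assume u: "length u = 2 * M"
  obtain a b where ab: "length a = M" "length b = M" "u = interleave a b"
    using interleave_surj[OF u] by blast
  have "a \<in> word_enum M ` {0..<2 ^ M}"
    using bij_betw_imp_surj_on[OF bij_word_enum] ab(1) by blast
  then obtain s where s: "s < 2 ^ M" "word_enum M s = a" by auto
  let ?n = "length w div M"
  let ?rank = "\<lambda>i. occurrence_rank (block M w) i mod 2 ^ M"
  have "block (2 * M) (refine M w) i = u \<longleftrightarrow> block M w i = b \<and> ?rank i = s"
    if i: "i < ?n" for i
  proof -
    have "?rank i \<in> {0..<2 ^ M}" by simp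
    then have "length (word_enum M (?rank i)) = M"
      using bij_betw_apply[OF bij_word_enum] by simp
    moreover have "length (block M w i) = M" using length_block[OF block_end_le[OF i]] .
    moreover have enum: "word_enum M (?rank i) = a \<longleftrightarrow> ?rank i = s"
      using s bij_betw_imp_inj_on[OF bij_word_enum, of M] by (auto simp: inj_on_def)
    ultimately have "block (2 * M) (refine M w) i = u \<longleftrightarrow> word_enum M (?rank i) = a \<and> block M w i = b"
      unfolding block_refine[OF M(1) i] ab(3) using ab by (intro interleave_eq_iff) auto
    with enum show ?thesis by blast
  qed
  then have "block_count (2 * M) (refine M w) u = card {i. i < ?n \<and> block M w i = b \<and> ?rank i = s}"
    unfolding block_count_def length_refine using M(1) by (intro arg_cong[where f = card]) auto
  also have "\<dots> = card {k. k < block_count M w b \<and> k mod 2 ^ M = s}"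
    unfolding block_count_def by (rule card_occurrence_rank_mod)
  also have "\<dots> = c div 2 ^ M"
    using uniform ab(2) dvd card_mod_class[OF s(1), of "c div 2 ^ M"] by (simp add: blocks_uniform_def)
  finally show "block_count (2 * M) (refine M w) u = c div 2 ^ M" .
qed

lemma card_less_filter: "card {i. i < n \<and> P i} = length (filter P [0..<n])"
proof -
  have "{i. i < n \<and> P i} = set (filter P [0..<n])" by auto
  then show ?thesis by (metis distinct_card distinct_filter distinct_upt)
qed

lemma blocks_uniform_01: "blocks_uniform 1 [False, True] 1"
  unfolding blocks_uniform_def block_count_def card_less_filter
  by (auto simp: length_Suc_conv block_def upt_rec)

lemma blocks_uniform_0011: "blocks_uniform 1 [False, False, True, True] 2"
  unfolding blocks_uniform_def block_count_def card_less_filter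
  by (auto simp: length_Suc_conv block_def upt_rec)

(* For n >= 1, level n is the largest k with k + 2^k <= n. *)
fun level :: "nat \<Rightarrow> nat" where
  "level 0 = 0"
| "level (Suc n) = (if Suc (level n) + 2 ^ Suc (level n) \<le> Suc n then Suc (level n) else level n)"

lemma level_Suc_cases: "level (Suc n) = Suc (level n) \<or> level (Suc n) = level n"
  by simp

lemma level_le: "1 \<le> n \<Longrightarrow> level n + 2 ^ level n \<le> n"
proof (induction n)
  case (Suc n)
  then show ?case by (cases "n = 0") auto
qed simp

lemma level_maximal: "n < Suc (level n) + 2 ^ Suc (level n)"
  by (induction n) auto

lemma level_pos: "3 \<le> n \<Longrightarrow> 1 \<le> level n"
  using level_maximal[of n] by (cases "level n") auto

lemma level_unbounded: "B \<le> level (B + 2 ^ B)"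
proof (rule ccontr)
  assume "\<not> B \<le> level (B + 2 ^ B)"
  then have "Suc (level (B + 2 ^ B)) + 2 ^ Suc (level (B + 2 ^ B)) \<le> B + 2 ^ B"
    by (intro add_mono power_increasing) auto
  with level_maximal[of "B + 2 ^ B"] show False by simp
qed

lemma blocks_uniform_level_step:
  assumes n: "2 \<le> n"
    and uniform: "blocks_uniform (2 ^ level n) w (2 ^ (n - level n - 2 ^ level n))"
  shows "blocks_uniform (2 ^ level (Suc n)) (refine (2 ^ (level (Suc n) - 1)) w)
           (2 ^ (Suc n - level (Suc n) - 2 ^ level (Suc n)))"
proof -
  let ?k = "level n"
  have le: "?k + 2 ^ ?k \<le> n" using level_le n by simp
  consider (up) "level (Suc n) = Suc ?k" | (same) "level (Suc n) = ?k"
    using level_Suc_cases by blast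
  then show ?thesis
  proof cases
    case up
    then have "2 ^ ?k \<le> n - ?k - 2 ^ ?k" using level_le[of "Suc n"] by simp
    then have "blocks_uniform (2 * 2 ^ ?k) (refine (2 ^ ?k) w) (2 ^ (n - ?k - 2 ^ ?k) div 2 ^ 2 ^ ?k)"
      by (intro blocks_uniform_refine[OF uniform] le_imp_power_dvd)
    moreover have "2 ^ (n - ?k - 2 ^ ?k) div 2 ^ 2 ^ ?k = (2::nat) ^ (n - ?k - 2 ^ ?k - 2 ^ ?k)"
      using power_diff[of "2::nat" "2 ^ ?k" "n - ?k - 2 ^ ?k"] \<open>2 ^ ?k \<le> n - ?k - 2 ^ ?k\<close> by simp
    ultimately show ?thesis using up by (simp add: mult_2 add.assoc)
  next
    case same
    then have k: "1 \<le> ?k" using level_pos[of "Suc n"] n by simp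
    define M :: nat where "M = 2 ^ (?k - 1)"
    have M: "2 * M = 2 ^ ?k" using k by (simp add: M_def power_Suc[symmetric])
    have "blocks_uniform M w (2 * 2 ^ M * 2 ^ (n - ?k - 2 ^ ?k))"
      using blocks_uniform_halve[of M w] uniform M by (simp add: M_def)
    then have "blocks_uniform (2 * M) (refine M w) (2 * 2 ^ M * 2 ^ (n - ?k - 2 ^ ?k) div 2 ^ M)"
      by (rule blocks_uniform_refine) simp
    moreover have "2 * 2 ^ M * 2 ^ (n - ?k - 2 ^ ?k) div 2 ^ M = (2::nat) ^ (Suc n - ?k - 2 ^ ?k)"
      using le by (simp add: Suc_diff_le)
    ultimately show ?thesis using same M by (simp add: M_def)
  qed
qed

(* Refinement produces even block lengths only, so the 1-uniform word 0011 is given directly;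
   the value at 0 is irrelevant. *)
fun perfect_word :: "nat \<Rightarrow> bool list" where
  "perfect_word (Suc (Suc (Suc n))) =
     refine (2 ^ (level (Suc (Suc (Suc n))) - 1)) (perfect_word (Suc (Suc n)))"
| "perfect_word (Suc (Suc 0)) = [False, False, True, True]"
| "perfect_word _ = [False, True]"

lemma perfect_word_Suc:
  "2 \<le> n \<Longrightarrow> perfect_word (Suc n) = refine (2 ^ (level (Suc n) - 1)) (perfect_word n)"
  by (cases n rule: perfect_word.cases) auto

lemma perfect_word_blocks_uniform:
  "1 \<le> n \<Longrightarrow> length (perfect_word n) = 2 ^ n
     \<and> blocks_uniform (2 ^ level n) (perfect_word n) (2 ^ (n - level n - 2 ^ level n))"
proof (induction n rule: nat_induct_at_least)
  case base
  then show ?case using blocks_uniform_01 by simp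
next
  case (Suc n)
  show ?case
  proof (cases "n = 1")
    case True
    then show ?thesis using blocks_uniform_0011 by (simp add: numeral_2_eq_2)
  next
    case False
    with Suc have n: "2 \<le> n" by simp
    with Suc show ?thesis
      using blocks_uniform_level_step[OF n]
      by (simp add: perfect_word_Suc[OF n] length_refine del: level.simps)
  qed
qed

lemma perfect_perfect_word: "1 \<le> n \<Longrightarrow> perfect (2 ^ level n) (perfect_word n)"
proof (rule perfect_if_blocks_uniform)
  assume n: "1 \<le> n"
  then show "blocks_uniform (2 ^ level n) (perfect_word n) (2 ^ (n - level n - 2 ^ level n))"
    using perfect_word_blocks_uniform by blast
  have "level n + 2 ^ level n \<le> n" using level_le n .
  then show "2 ^ (n - level n - 2 ^ level n) * (2 ^ level n * 2 ^ 2 ^ level n) = length (perfect_word n)"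
    using perfect_word_blocks_uniform[OF n] by (simp flip: power_add)
qed

lemma even_part_perfect_word: "1 \<le> n \<Longrightarrow> even_part (perfect_word (Suc n)) = perfect_word n"
  by (cases "n = 1") (simp_all add: even_part_Cons_Cons even_part_refine perfect_word_Suc)

theorem corollary12:
  shows "(\<exists>(w :: nat \<Rightarrow> bool list) (l :: nat \<Rightarrow> nat).
            (\<forall>n\<ge>1. l n > 0 \<and> length (w n) = 2 ^ n \<and> even_part (w (Suc n)) = w n
                     \<and> perfect (l n) (w n) \<and> l n \<le> l (Suc n))
          \<and> (\<forall>B. \<exists>n\<ge>1. l n > B))
       \<and> (\<exists>(w :: nat \<Rightarrow> bool list) (l :: nat \<Rightarrow> nat).
            (\<forall>n\<ge>1. l n > 0 \<and> length (w n) = 2 ^ n \<and> even_part (w (Suc n)) = w n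
                     \<and> perfect (l n) (w n) \<and> l n \<le> l (Suc n))
          \<and> (\<forall>B. \<exists>n\<ge>1. l n > B)
          \<and> w 1 = [False, True])"
proof -
  let ?l = "\<lambda>n. 2 ^ level n :: nat"
  have "?l n \<le> ?l (Suc n)" for n
    using level_Suc_cases[of n] by (auto simp del: level.simps)
  then have "\<forall>n\<ge>1. ?l n > 0 \<and> length (perfect_word n) = 2 ^ n
           \<and> even_part (perfect_word (Suc n)) = perfect_word n
           \<and> perfect (?l n) (perfect_word n) \<and> ?l n \<le> ?l (Suc n)"
    using perfect_word_blocks_uniform perfect_perfect_word even_part_perfect_word by simp
  moreover have "\<forall>B. \<exists>n\<ge>1. ?l n > B"
  proof
    fix B :: nat
    have "B < 2 ^ B" by simp
    also have "\<dots> \<le> ?l (B + 2 ^ B)" by (intro power_increasing level_unbounded) simp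
    finally show "\<exists>n\<ge>1. ?l n > B" by (intro exI[of _ "B + 2 ^ B"]) (simp add: Suc_le_eq)
  qed
  moreover have "perfect_word 1 = [False, True]" by simp
  ultimately show ?thesis
    by (intro conjI exI[of _ perfect_word] exI[of _ ?l])
qed

end
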